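(* Let $A$ be a Noetherian commutative ring with identity, let $A[\mathbf{x}]=A[x_1,\ldots,x_n]$ be equipped with a monomial order, let $I\subset A[\mathbf{x}]$ be an ideal, and let $B=A/(I\cap A)$. Then $$\mathrm{in}(I)\,B[\mathbf{x}]=\mathrm{in}(I\,B[\mathbf{x}]).$$
   Context: A monomial order $>$ is a total order on monomials such that $\mathbf{x}^E>\mathbf{x}^F$ implies $\mathbf{x}^G\mathbf{x}^E>\mathbf{x}^G\mathbf{x}^F$, and $x_i>1$ for each $i$; the same order is used over $B$. $\mathrm{in}(f)$ is the greatest term $c\,\mathbf{x}^E$ ($c\neq0$) of a nonzero polynomial $f$; $\mathrm{in}(I)$ is the ideal generated by all $\mathrm{in}(f)$, $f\in I$. $K\,B[\mathbf{x}]$ denotes the ideal of $B[\mathbf{x}]$ generated by the image of $K\subset A[\mathbf{x}]$ under the coefficientwise quotient map. *)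

theory Defs
  imports "HOL-Library.Poly_Mapping"
begin

definition is_ideal :: "'r::comm_ring_1 set \<Rightarrow> bool" where
  "is_ideal I \<longleftrightarrow> 0 \<in> I \<and> (\<forall>x\<in>I. \<forall>y\<in>I. x + y \<in> I) \<and> (\<forall>r. \<forall>x\<in>I. r * x \<in> I)"

definition ideal_gen :: "'r::comm_ring_1 set \<Rightarrow> 'r set" where
  "ideal_gen S = \<Inter>{J. is_ideal J \<and> S \<subseteq> J}"

definition noetherian_ring :: "'r::comm_ring_1 itself \<Rightarrow> bool" where
  "noetherian_ring _ \<longleftrightarrow> (\<forall>I::'r set. is_ideal I \<longrightarrow> (\<exists>F. finite F \<and> I = ideal_gen F))"

definition ring_hom :: "('r::comm_ring_1 \<Rightarrow> 's::comm_ring_1) \<Rightarrow> bool" where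
  "ring_hom \<phi> \<longleftrightarrow> (\<forall>x y. \<phi> (x + y) = \<phi> x + \<phi> y) \<and> (\<forall>x y. \<phi> (x * y) = \<phi> x * \<phi> y) \<and> \<phi> 1 = 1"

text \<open>Polynomials in the variables of the finite type 'v: monomials are exponent vectors
 v =>0 nat, polynomials are finitely supported maps monomial to coefficient.\<close>
type_synonym ('v, 'r) mpoly = "('v \<Rightarrow>\<^sub>0 nat) \<Rightarrow>\<^sub>0 'r"

text \<open>A monomial order, given as its non-strict relation \<open>ord E F\<close> meaning x^E \<le> x^F.\<close>
definition monomial_order :: "(('v \<Rightarrow>\<^sub>0 nat) \<Rightarrow> ('v \<Rightarrow>\<^sub>0 nat) \<Rightarrow> bool) \<Rightarrow> bool" where
  "monomial_order ord \<longleftrightarrow>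
     (\<forall>E. ord E E) \<and> (\<forall>E F. ord E F \<and> ord F E \<longrightarrow> E = F) \<and>
     (\<forall>E F G. ord E F \<and> ord F G \<longrightarrow> ord E G) \<and> (\<forall>E F. ord E F \<or> ord F E) \<and>
     (\<forall>E F G. ord E F \<longrightarrow> ord (G + E) (G + F)) \<and>
     (\<forall>i. ord 0 (Poly_Mapping.single i 1) \<and> Poly_Mapping.single i 1 \<noteq> (0 :: 'v \<Rightarrow>\<^sub>0 nat))"

definition lead_mon :: "(('v \<Rightarrow>\<^sub>0 nat) \<Rightarrow> ('v \<Rightarrow>\<^sub>0 nat) \<Rightarrow> bool) \<Rightarrow> ('v, 'r::zero) mpoly \<Rightarrow> 'v \<Rightarrow>\<^sub>0 nat" where
  "lead_mon ord f = (THE m. m \<in> Poly_Mapping.keys f \<and> (\<forall>m'\<in>Poly_Mapping.keys f. ord m' m))"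

definition init_term :: "(('v \<Rightarrow>\<^sub>0 nat) \<Rightarrow> ('v \<Rightarrow>\<^sub>0 nat) \<Rightarrow> bool) \<Rightarrow> ('v, 'r::zero) mpoly \<Rightarrow> ('v, 'r) mpoly" where
  "init_term ord f = Poly_Mapping.single (lead_mon ord f) (Poly_Mapping.lookup f (lead_mon ord f))"

definition init_ideal :: "(('v \<Rightarrow>\<^sub>0 nat) \<Rightarrow> ('v \<Rightarrow>\<^sub>0 nat) \<Rightarrow> bool) \<Rightarrow> ('v, 'r::comm_ring_1) mpoly set \<Rightarrow> ('v, 'r) mpoly set" where
  "init_ideal ord I = ideal_gen {init_term ord f | f. f \<in> I \<and> f \<noteq> 0}"

definition ext_ideal :: "('r::comm_ring_1 \<Rightarrow> 's::comm_ring_1) \<Rightarrow> ('v, 'r) mpoly set \<Rightarrow> ('v, 's) mpoly set" where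
  "ext_ideal \<phi> K = ideal_gen (Poly_Mapping.map \<phi> ` K)"

end

theory Submission
  imports Defs
begin

(* Let M be the coefficientwise map A[x] \<rightarrow> B[x].  Since M is a surjective ring homomorphism,
   I B[x] is just M(I).  If f \<in> I and M does not kill the leading coefficient of f, then M f
   has the same leading monomial, so M(in f) = in(M f); otherwise M(in f) = 0.  This gives
   in(I) B[x] \<subseteq> in(I B[x]).  Conversely, every g \<in> I B[x] is M f for some f \<in> I, and the
   kernel of A \<rightarrow> B lies in I, so we may delete from f
   all terms whose coefficient lies in that kernel without leaving I.  The resulting f' \<in> I has
   M f' = g with the same support, hence in(g) = M(in f'). *)

lemma is_ideal_ideal_gen: "is_ideal (ideal_gen S)"
  unfolding ideal_gen_def is_ideal_def by auto

lemma ideal_gen_subset: "S \<subseteq> ideal_gen S"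
  unfolding ideal_gen_def by auto

lemma ideal_gen_least: "is_ideal J \<Longrightarrow> S \<subseteq> J \<Longrightarrow> ideal_gen S \<subseteq> J"
  unfolding ideal_gen_def by auto

lemma ideal_gen_ideal: "is_ideal J \<Longrightarrow> ideal_gen J = J"
  by (simp add: ideal_gen_least ideal_gen_subset subset_antisym)

lemma ideal_sum_mem:
  assumes "is_ideal J" "finite A" "\<And>x. x \<in> A \<Longrightarrow> f x \<in> J"
  shows "sum f A \<in> J"
  using assms(2,3) by (induction A rule: finite_induct) (use assms(1) in \<open>auto simp: is_ideal_def\<close>)

lemma ideal_diff_mem:
  assumes "is_ideal J" "x \<in> J" "y \<in> J"
  shows "x - y \<in> J"
proof -
  have "x + (-1) * y \<in> J"
    using assms unfolding is_ideal_def by blast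
  then show ?thesis by simp
qed

lemma ring_hom_zero: "ring_hom \<psi> \<Longrightarrow> \<psi> 0 = 0"
  unfolding ring_hom_def by (metis add_cancel_right_right add_0)

lemma is_ideal_vimage:
  assumes "ring_hom \<psi>" "is_ideal J"
  shows "is_ideal (\<psi> -` J)"
  using assms ring_hom_zero[OF assms(1)] unfolding is_ideal_def ring_hom_def by auto

lemma is_ideal_image_surj:
  assumes "ring_hom \<psi>" "surj \<psi>" "is_ideal I"
  shows "is_ideal (\<psi> ` I)"
  unfolding is_ideal_def
proof (intro conjI ballI allI)
  show "0 \<in> \<psi> ` I"
    using assms(3) ring_hom_zero[OF assms(1)] unfolding is_ideal_def by (metis image_eqI)
next
  fix x y assume "x \<in> \<psi> ` I" "y \<in> \<psi> ` I"
  then show "x + y \<in> \<psi> ` I"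
    using assms(1,3) unfolding is_ideal_def ring_hom_def by (auto intro!: image_eqI[of _ _ "_ + _"])
next
  fix r x assume "x \<in> \<psi> ` I"
  moreover obtain s where "r = \<psi> s"
    using assms(2) by (metis surjD)
  ultimately show "r * x \<in> \<psi> ` I"
    using assms(1,3) unfolding is_ideal_def ring_hom_def by (auto intro!: image_eqI[of _ _ "_ * _"])
qed

lemma ideal_gen_image_ideal_gen:
  assumes "ring_hom \<psi>"
  shows "ideal_gen (\<psi> ` ideal_gen S) = ideal_gen (\<psi> ` S)"
proof (rule subset_antisym)
  have "ideal_gen S \<subseteq> \<psi> -` ideal_gen (\<psi> ` S)"
    using ideal_gen_subset[of "\<psi> ` S"]
    by (intro ideal_gen_least is_ideal_vimage[OF assms] is_ideal_ideal_gen) auto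
  then show "ideal_gen (\<psi> ` ideal_gen S) \<subseteq> ideal_gen (\<psi> ` S)"
    by (intro ideal_gen_least is_ideal_ideal_gen) auto
  show "ideal_gen (\<psi> ` S) \<subseteq> ideal_gen (\<psi> ` ideal_gen S)"
    using ideal_gen_subset[of S] ideal_gen_subset[of "\<psi> ` ideal_gen S"]
    by (intro ideal_gen_least is_ideal_ideal_gen) auto
qed

lemma is_ideal_ext_ideal: "is_ideal (ext_ideal \<phi> K)"
  unfolding ext_ideal_def by (rule is_ideal_ideal_gen)

lemma map_mem_ext_ideal: "p \<in> K \<Longrightarrow> Poly_Mapping.map \<phi> p \<in> ext_ideal \<phi> K"
  unfolding ext_ideal_def by (rule subsetD[OF ideal_gen_subset]) (rule imageI)

lemma lookup_map: "\<phi> 0 = 0 \<Longrightarrow> Poly_Mapping.lookup (Poly_Mapping.map \<phi> p) k = \<phi> (Poly_Mapping.lookup p k)"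
  by (simp add: Poly_Mapping.map.rep_eq when_def)

lemma map_zero [simp]: "Poly_Mapping.map \<phi> 0 = 0"
  by transfer simp

lemma keys_map_subset: "\<phi> 0 = 0 \<Longrightarrow> Poly_Mapping.keys (Poly_Mapping.map \<phi> p) \<subseteq> Poly_Mapping.keys p"
  by (auto simp: in_keys_iff lookup_map)

lemma map_add_ring_hom:
  assumes "ring_hom \<phi>"
  shows "Poly_Mapping.map \<phi> (p + q) = Poly_Mapping.map \<phi> p + Poly_Mapping.map \<phi> q"
  using assms ring_hom_zero[OF assms]
  by (intro poly_mapping_eqI) (simp add: lookup_map lookup_add ring_hom_def)

lemma update_eq_single_add:
  "k \<notin> Poly_Mapping.keys f \<Longrightarrow> Poly_Mapping.update k c f = Poly_Mapping.single k c + f"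
  by (intro poly_mapping_eqI) (auto simp: lookup_update lookup_add lookup_single when_def in_keys_iff)

lemma map_single_mult_ring_hom:
  fixes \<phi> :: "'a::comm_ring_1 \<Rightarrow> 'b::comm_ring_1" and q :: "'k::comm_monoid_add \<Rightarrow>\<^sub>0 'a"
  assumes "ring_hom \<phi>"
  shows "Poly_Mapping.map \<phi> (Poly_Mapping.single k c * q)
       = Poly_Mapping.single k (\<phi> c) * Poly_Mapping.map \<phi> q"
proof (induction q rule: Poly_Mapping.update_induct)
  case const
  then show ?case by (simp add: ring_hom_zero[OF assms])
next
  case (update f l d)
  then show ?case
    using assms ring_hom_zero[OF assms]
    by (simp add: update_eq_single_add distrib_left mult_single map_add_ring_hom ring_hom_def)
qed

lemma map_mult_ring_hom:
  fixes \<phi> :: "'a::comm_ring_1 \<Rightarrow> 'b::comm_ring_1" and p q :: "'k::comm_monoid_add \<Rightarrow>\<^sub>0 'a"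
  assumes "ring_hom \<phi>"
  shows "Poly_Mapping.map \<phi> (p * q) = Poly_Mapping.map \<phi> p * Poly_Mapping.map \<phi> q"
proof (induction p rule: Poly_Mapping.update_induct)
  case const
  then show ?case by (simp add: ring_hom_zero[OF assms])
next
  case (update f k c)
  then show ?case
    using ring_hom_zero[OF assms]
    by (simp add: update_eq_single_add distrib_right map_add_ring_hom[OF assms] map_single_mult_ring_hom[OF assms])
qed

lemma ring_hom_map:
  fixes \<phi> :: "'a::comm_ring_1 \<Rightarrow> 'b::comm_ring_1"
  assumes "ring_hom \<phi>"
  shows "ring_hom (Poly_Mapping.map \<phi> :: ('k::comm_monoid_add \<Rightarrow>\<^sub>0 'a) \<Rightarrow> _)"
  using assms ring_hom_zero[OF assms] unfolding ring_hom_def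
  by (simp add: map_add_ring_hom[OF assms] map_mult_ring_hom[OF assms] flip: single_one)

lemma surj_map:
  assumes "\<phi> 0 = 0" "surj \<phi>"
  shows "surj (Poly_Mapping.map \<phi>)"
proof -
  define \<psi> where "\<psi> b = (if b = 0 then 0 else inv \<phi> b)" for b
  have "\<psi> 0 = 0" "\<And>b. \<phi> (\<psi> b) = b"
    using assms by (simp_all add: \<psi>_def surj_f_inv_f)
  then have "Poly_Mapping.map \<phi> (Poly_Mapping.map \<psi> r) = r" for r
    using assms(1) by (intro poly_mapping_eqI) (simp add: lookup_map)
  then show ?thesis by (rule surjI)
qed

lemma ext_ideal_eq_image:
  assumes "ring_hom \<phi>" "surj \<phi>" "is_ideal I"
  shows "ext_ideal \<phi> I = Poly_Mapping.map \<phi> ` I"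
  unfolding ext_ideal_def
  using assms ring_hom_map[OF assms(1)] surj_map[OF ring_hom_zero[OF assms(1)] assms(2)]
  by (intro ideal_gen_ideal is_ideal_image_surj) auto

lemma mem_ideal_if_const_coeffs:
  fixes h :: "'k::comm_monoid_add \<Rightarrow>\<^sub>0 'a::comm_ring_1"
  assumes "is_ideal J" "\<And>k. Poly_Mapping.single 0 (Poly_Mapping.lookup h k) \<in> J"
  shows "h \<in> J"
proof -
  have "h = (\<Sum>k\<in>Poly_Mapping.keys h. Poly_Mapping.single k 1 * Poly_Mapping.single 0 (Poly_Mapping.lookup h k))"
    by (intro poly_mapping_eqI) (simp add: mult_single lookup_sum lookup_single when_def in_keys_iff)
  also have "\<dots> \<in> J"
    using assms(2) by (intro ideal_sum_mem[OF assms(1)]) (use assms(1) in \<open>auto simp: is_ideal_def\<close>)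
  finally show ?thesis .
qed

definition drop_kernel_coeffs :: "('a::zero \<Rightarrow> 'b::zero) \<Rightarrow> ('k \<Rightarrow>\<^sub>0 'a) \<Rightarrow> 'k \<Rightarrow>\<^sub>0 'a" where
  "drop_kernel_coeffs \<phi> f = Poly_Mapping.map (\<lambda>c. if \<phi> c = 0 then 0 else c) f"

lemma lookup_drop_kernel_coeffs:
  "Poly_Mapping.lookup (drop_kernel_coeffs \<phi> f) k
     = (if \<phi> (Poly_Mapping.lookup f k) = 0 then 0 else Poly_Mapping.lookup f k)"
  unfolding drop_kernel_coeffs_def by (simp add: lookup_map)

lemma map_drop_kernel_coeffs:
  "\<phi> 0 = 0 \<Longrightarrow> Poly_Mapping.map \<phi> (drop_kernel_coeffs \<phi> f) = Poly_Mapping.map \<phi> f"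
  by (intro poly_mapping_eqI) (simp add: lookup_map lookup_drop_kernel_coeffs)

lemma keys_drop_kernel_coeffs:
  "\<phi> 0 = 0 \<Longrightarrow> Poly_Mapping.keys (drop_kernel_coeffs \<phi> f) = Poly_Mapping.keys (Poly_Mapping.map \<phi> f)"
  by (auto simp: in_keys_iff lookup_map lookup_drop_kernel_coeffs)

lemma drop_kernel_coeffs_mem:
  fixes f :: "'k::comm_monoid_add \<Rightarrow>\<^sub>0 'a::comm_ring_1"
  assumes "is_ideal I" "\<And>a. \<phi> a = 0 \<Longrightarrow> Poly_Mapping.single 0 a \<in> I" "f \<in> I" "\<phi> 0 = 0"
  shows "drop_kernel_coeffs \<phi> f \<in> I"
proof -
  have "f - drop_kernel_coeffs \<phi> f \<in> I"
    by (rule mem_ideal_if_const_coeffs[OF assms(1)])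
      (use assms(2,4) in \<open>simp add: lookup_minus lookup_drop_kernel_coeffs\<close>)
  from ideal_diff_mem[OF assms(1,3) this] show ?thesis by simp
qed

lemma monomial_order_refl: "monomial_order ord \<Longrightarrow> ord E E"
  unfolding monomial_order_def by blast

lemma monomial_order_antisym: "monomial_order ord \<Longrightarrow> ord E F \<Longrightarrow> ord F E \<Longrightarrow> E = F"
  unfolding monomial_order_def by blast

lemma monomial_order_trans: "monomial_order ord \<Longrightarrow> ord E F \<Longrightarrow> ord F G \<Longrightarrow> ord E G"
  unfolding monomial_order_def by blast

lemma monomial_order_total: "monomial_order ord \<Longrightarrow> ord E F \<or> ord F E"
  unfolding monomial_order_def by blast

lemma monomial_order_finite_greatest:
  assumes "monomial_order ord" "finite S" "S \<noteq> {}"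
  shows "\<exists>m\<in>S. \<forall>E\<in>S. ord E m"
  using assms(2,3)
proof (induction S rule: finite_ne_induct)
  case (singleton E)
  then show ?case using monomial_order_refl[OF assms(1)] by auto
next
  case (insert E S)
  then obtain m where m: "m \<in> S" "\<forall>F\<in>S. ord F m" by blast
  then show ?case
    using monomial_order_total[OF assms(1), of E m] monomial_order_trans[OF assms(1)]
      monomial_order_refl[OF assms(1)]
    by (metis insert_iff)
qed

lemma lead_mon_eqI:
  assumes "monomial_order ord" "m \<in> Poly_Mapping.keys f" "\<And>E. E \<in> Poly_Mapping.keys f \<Longrightarrow> ord E m"
  shows "lead_mon ord f = m"
  unfolding lead_mon_def using assms monomial_order_antisym[OF assms(1)] by (intro the_equality) auto

lemma lead_mon_greatest_key:
  assumes "monomial_order ord" "f \<noteq> 0"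
  shows "lead_mon ord f \<in> Poly_Mapping.keys f \<and> (\<forall>E\<in>Poly_Mapping.keys f. ord E (lead_mon ord f))"
proof -
  obtain m where "m \<in> Poly_Mapping.keys f" "\<forall>E\<in>Poly_Mapping.keys f. ord E m"
    using monomial_order_finite_greatest[OF assms(1), of "Poly_Mapping.keys f"] assms(2) by auto
  with lead_mon_eqI[OF assms(1)] show ?thesis by auto
qed

lemma is_ideal_init_ideal: "is_ideal (init_ideal ord I)"
  unfolding init_ideal_def by (rule is_ideal_ideal_gen)

lemma init_term_in_init_ideal: "f \<in> I \<Longrightarrow> f \<noteq> 0 \<Longrightarrow> init_term ord f \<in> init_ideal ord I"
  unfolding init_ideal_def by (rule subsetD[OF ideal_gen_subset]) blast

lemma init_term_map_same_keys:
  assumes "\<phi> 0 = 0" "Poly_Mapping.keys (Poly_Mapping.map \<phi> f) = Poly_Mapping.keys f"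
  shows "init_term ord (Poly_Mapping.map \<phi> f) = Poly_Mapping.map \<phi> (init_term ord f)"
  unfolding init_term_def lead_mon_def assms(2) using assms(1) by (simp add: lookup_map)

lemma init_term_map:
  assumes "monomial_order ord" "\<phi> 0 = 0" "\<phi> (Poly_Mapping.lookup f (lead_mon ord f)) \<noteq> 0"
  shows "init_term ord (Poly_Mapping.map \<phi> f) = Poly_Mapping.map \<phi> (init_term ord f)"
proof -
  have "f \<noteq> 0" using assms(2,3) by auto
  have "lead_mon ord (Poly_Mapping.map \<phi> f) = lead_mon ord f"
    using assms(2,3) lead_mon_greatest_key[OF assms(1) \<open>f \<noteq> 0\<close>] keys_map_subset[of \<phi> f, OF assms(2)]
    by (intro lead_mon_eqI[OF assms(1)]) (auto simp: in_keys_iff lookup_map)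
  then show ?thesis
    unfolding init_term_def using assms(2) by (simp add: lookup_map)
qed

lemma ext_init_ideal_subset:
  assumes "monomial_order ord" "ring_hom \<phi>"
  shows "ext_ideal \<phi> (init_ideal ord I) \<subseteq> init_ideal ord (ext_ideal \<phi> I)"
proof -
  have "Poly_Mapping.map \<phi> (init_term ord f) \<in> init_ideal ord (ext_ideal \<phi> I)"
    if "f \<in> I" "f \<noteq> 0" for f
  proof (cases "\<phi> (Poly_Mapping.lookup f (lead_mon ord f)) = 0")
    case True
    then have "Poly_Mapping.map \<phi> (init_term ord f) = 0"
      unfolding init_term_def using ring_hom_zero[OF assms(2)] by simp
    moreover have "0 \<in> init_ideal ord (ext_ideal \<phi> I)"
      using is_ideal_init_ideal unfolding is_ideal_def by blast
    ultimately show ?thesis by simp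
  next
    case False
    have "Poly_Mapping.map \<phi> f \<in> ext_ideal \<phi> I"
      using that(1) by (rule map_mem_ext_ideal)
    moreover have "Poly_Mapping.map \<phi> f \<noteq> 0"
      using False ring_hom_zero[OF assms(2)] by (metis lookup_map lookup_zero)
    ultimately show ?thesis
      using init_term_in_init_ideal init_term_map[OF assms(1) ring_hom_zero[OF assms(2)] False] by metis
  qed
  then have gens: "Poly_Mapping.map \<phi> ` {init_term ord f |f. f \<in> I \<and> f \<noteq> 0}
      \<subseteq> init_ideal ord (ext_ideal \<phi> I)" by blast
  have "ext_ideal \<phi> (init_ideal ord I)
      = ideal_gen (Poly_Mapping.map \<phi> ` {init_term ord f |f. f \<in> I \<and> f \<noteq> 0})"
    unfolding ext_ideal_def init_ideal_def by (rule ideal_gen_image_ideal_gen[OF ring_hom_map[OF assms(2)]])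
  also have "\<dots> \<subseteq> init_ideal ord (ext_ideal \<phi> I)"
    by (rule ideal_gen_least[OF is_ideal_init_ideal gens])
  finally show ?thesis .
qed

lemma init_ext_ideal_subset:
  assumes "ring_hom \<phi>" "surj \<phi>" "is_ideal I"
    and kernel: "\<And>a. \<phi> a = 0 \<Longrightarrow> Poly_Mapping.single 0 a \<in> I"
  shows "init_ideal ord (ext_ideal \<phi> I) \<subseteq> ext_ideal \<phi> (init_ideal ord I)"
proof -
  have \<phi>0: "\<phi> 0 = 0" by (rule ring_hom_zero[OF assms(1)])
  have "init_term ord g \<in> ext_ideal \<phi> (init_ideal ord I)"
    if "g \<in> ext_ideal \<phi> I" "g \<noteq> 0" for g
  proof -
    have "g \<in> Poly_Mapping.map \<phi> ` I"
      using that(1) ext_ideal_eq_image[OF assms(1-3)] by simp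
    then obtain f where g: "g = Poly_Mapping.map \<phi> f" and "f \<in> I" by (rule imageE)
    define f' where "f' = drop_kernel_coeffs \<phi> f"
    have "f' \<in> I"
      unfolding f'_def using drop_kernel_coeffs_mem[where \<phi> = \<phi>, OF assms(3) kernel \<open>f \<in> I\<close> \<phi>0] .
    have "Poly_Mapping.map \<phi> f' = g"
      and keys: "Poly_Mapping.keys (Poly_Mapping.map \<phi> f') = Poly_Mapping.keys f'"
      unfolding f'_def g by (simp_all add: map_drop_kernel_coeffs keys_drop_kernel_coeffs \<phi>0)
    with that(2) have "f' \<noteq> 0" "init_term ord g = Poly_Mapping.map \<phi> (init_term ord f')"
      using init_term_map_same_keys[OF \<phi>0 keys] by auto
    with \<open>f' \<in> I\<close> show ?thesis
      by (simp add: init_term_in_init_ideal map_mem_ext_ideal)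
  qed
  then show ?thesis
    unfolding init_ideal_def[of ord "ext_ideal \<phi> I"]
    by (intro ideal_gen_least[OF is_ideal_ext_ideal]) blast
qed

theorem lemma3p9:
  fixes ord :: "('v::finite \<Rightarrow>\<^sub>0 nat) \<Rightarrow> ('v \<Rightarrow>\<^sub>0 nat) \<Rightarrow> bool"
    and I :: "('v, 'a::comm_ring_1) mpoly set"
    and \<phi> :: "'a \<Rightarrow> 'b::comm_ring_1"
  assumes "noetherian_ring TYPE('a)"
    and "monomial_order ord"
    and "is_ideal I"
    and "ring_hom \<phi>" and "surj \<phi>"
    and "\<forall>a. \<phi> a = 0 \<longleftrightarrow> Poly_Mapping.single 0 a \<in> I"
  shows "ext_ideal \<phi> (init_ideal ord I) = init_ideal ord (ext_ideal \<phi> I)"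
  using ext_init_ideal_subset[OF assms(2,4)] init_ext_ideal_subset[OF assms(4,5,3)] assms(6)
  by blast

end
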